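(* Let $(t_k)_{k\in\mathbb{N}}$ be a strictly increasing sequence with $t_1=\pi/4$ and $t_k\to\pi/2$. In $\mathbb{R}^3$ let $C_1=\mathrm{co}\{(-2,2,1),(-2,2,-1)\}$, $C_2=\mathrm{co}\{(2,2,1),(2,2,-1)\}$ and $C_3=\overline{\mathrm{co}}\{(\cos t_k,\sin t_k,(-1)^k): k\in\mathbb{N}\}$, and let $C_1'=\{(-2,2)\}$, $C_2'=\{(2,2)\}$, $C_3'=\overline{\mathrm{co}}\{(\cos t_k,\sin t_k):k\in\mathbb{N}\}\subseteq\mathbb{R}^2$ be their projections onto the $xy$-plane. Then for each $\varepsilon\in(0,1)$ there exists a unique $\varepsilon$-cycle $(u_1,u_2,u_3)$ for $C_1,C_2,C_3$, and there exists a unique $\varepsilon$-cycle $(u_1',u_2',u_3')$ for $C_1',C_2',C_3'$.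
   Context: For a nonempty closed convex set $C$ in a Euclidean space, $\Pi_C(u)$ denotes the Euclidean projection of $u$ onto $C$. For three nonempty closed convex sets $D_1,D_2,D_3$ and $\varepsilon\in(0,1]$, an $\varepsilon$-cycle is a triple $(u_1,u_2,u_3)$ with $u_1=u_3+\varepsilon(\Pi_{D_1}(u_3)-u_3)$, $u_2=u_1+\varepsilon(\Pi_{D_2}(u_1)-u_1)$, $u_3=u_2+\varepsilon(\Pi_{D_3}(u_2)-u_2)$. $\mathrm{co}$ denotes convex hull and $\overline{\mathrm{co}}$ closed convex hull. *)

theory Defs
  imports "HOL-Analysis.Analysis"
begin

text \<open>Euclidean projection onto a nonempty closed convex set is the library's closest_point.
  An eps-cycle for D1 D2 D3 is a triple (u1,u2,u3) satisfying the three relaxed projection equations.\<close>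

definition eps_cycle :: "'a::euclidean_space set \<Rightarrow> 'a set \<Rightarrow> 'a set \<Rightarrow> real \<Rightarrow> 'a \<times> 'a \<times> 'a \<Rightarrow> bool" where
  "eps_cycle D1 D2 D3 \<epsilon> u \<longleftrightarrow>
     (case u of (u1, u2, u3) \<Rightarrow>
        u1 = u3 + \<epsilon> *\<^sub>R (closest_point D1 u3 - u3) \<and>
        u2 = u1 + \<epsilon> *\<^sub>R (closest_point D2 u1 - u1) \<and>
        u3 = u2 + \<epsilon> *\<^sub>R (closest_point D3 u2 - u2))"

end

theory Submission
  imports Defs
begin

(*
  Existence: the composite of the three relaxed projections maps a large ball into itself, so
  Brouwer's theorem gives a fixed point, i.e. an eps-cycle.

  Uniqueness: relaxed projections are firmly nonexpansive, so along two eps-cycles all differences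
  u_i - v_i equal one vector d, and every projection acts on the two cycles as translation by d.
  In the plane the singleton C1' forces d = 0. In space C1 is a vertical segment, so d is vertical,
  and d is orthogonal to the normal n = u2 - p at p = Pi_C3(u2). If n is not horizontal, d = 0.
  If n is horizontal, the supporting plane of C3 at p is vertical; solving the planar part of the
  cycle shows that its trace line misses the accumulation point (0, 1) of the generators. Hence it
  touches at most two generators and stays uniformly away from all others, so on this face the
  height is an affine function of the planar position, and p, p - d (same planar position) have
  the same height.
*)

section \<open>Relaxed projections and \<open>\<epsilon>\<close>-cycles\<close>

definition relaxed_projection :: "'a::euclidean_space set \<Rightarrow> real \<Rightarrow> 'a \<Rightarrow> 'a" where
  "relaxed_projection D e x = x + e *\<^sub>R (closest_point D x - x)"

lemma eps_cycle_iff_relaxed_projection: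
  "eps_cycle D1 D2 D3 e (u1, u2, u3) \<longleftrightarrow>
     u1 = relaxed_projection D1 e u3 \<and> u2 = relaxed_projection D2 e u1 \<and>
     u3 = relaxed_projection D3 e u2"
  by (simp add: eps_cycle_def relaxed_projection_def)

lemma norm_convex_combination_sq_le:
  fixes a b :: "'a::real_inner"
  assumes "norm b \<le> norm a" "0 \<le> e"
  shows "(norm ((1 - e) *\<^sub>R a + e *\<^sub>R b))\<^sup>2 \<le> (norm a)\<^sup>2 - e * (1 - e) * (norm (a - b))\<^sup>2"
proof -
  have "0 \<le> e * (inner a a - inner b b)"
    using assms by (simp add: norm_le)
  then show ?thesis
    by (simp add: power2_norm_eq_inner inner_commute algebra_simps)
qed

lemma relaxed_projection_firmly_nonexpansive:
  fixes D :: "'a::euclidean_space set"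
  assumes "convex D" "closed D" "D \<noteq> {}" "0 \<le> e"
  shows "(norm (relaxed_projection D e x - relaxed_projection D e y))\<^sup>2 \<le> (norm (x - y))\<^sup>2
           - e * (1 - e) * (norm ((x - y) - (closest_point D x - closest_point D y)))\<^sup>2"
proof -
  have "norm (closest_point D x - closest_point D y) \<le> norm (x - y)"
    using closest_point_lipschitz[OF assms(1-3)] by (simp add: dist_norm)
  moreover have "relaxed_projection D e x - relaxed_projection D e y
      = (1 - e) *\<^sub>R (x - y) + e *\<^sub>R (closest_point D x - closest_point D y)"
    by (simp add: relaxed_projection_def algebra_simps)
  ultimately show ?thesis
    using norm_convex_combination_sq_le assms(4) by metis
qed

lemma relaxed_projection_in_cball:
  fixes D :: "'a::euclidean_space set"
  assumes "closed D" "D \<noteq> {}" "D \<subseteq> cball 0 r" "0 \<le> e" "e \<le> 1" "x \<in> cball 0 r"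
  shows "relaxed_projection D e x \<in> cball 0 r"
proof -
  have "closest_point D x \<in> cball 0 r"
    using closest_point_in_set[OF assms(1,2)] assms(3) by blast
  moreover have "relaxed_projection D e x = (1 - e) *\<^sub>R x + e *\<^sub>R closest_point D x"
    by (simp add: relaxed_projection_def algebra_simps)
  ultimately show ?thesis
    using convexD[OF convex_cball, of x 0 r "closest_point D x" "1 - e" e] assms(4-6) by simp
qed

lemma continuous_on_relaxed_projection:
  fixes D :: "'a::euclidean_space set"
  assumes "convex D" "closed D" "D \<noteq> {}"
  shows "continuous_on S (relaxed_projection D e)"
  unfolding relaxed_projection_def
  by (intro continuous_intros continuous_on_closest_point assms)

lemma eps_cycle_exists:
  fixes D1 D2 D3 :: "'a::euclidean_space set"
  assumes D1: "convex D1" "closed D1" "D1 \<noteq> {}" "bounded D1"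
    and D2: "convex D2" "closed D2" "D2 \<noteq> {}" "bounded D2"
    and D3: "convex D3" "closed D3" "D3 \<noteq> {}" "bounded D3"
    and e: "0 \<le> e" "e \<le> 1"
  shows "\<exists>u. eps_cycle D1 D2 D3 e u"
proof -
  obtain r where r: "0 < r" "D1 \<union> D2 \<union> D3 \<subseteq> ball 0 r"
    using bounded_subset_ballD[of "D1 \<union> D2 \<union> D3" 0] D1(4) D2(4) D3(4) by auto
  then have sub: "D1 \<subseteq> cball 0 r" "D2 \<subseteq> cball 0 r" "D3 \<subseteq> cball 0 r"
    using ball_subset_cball by blast+
  define T where "T x = relaxed_projection D3 e (relaxed_projection D2 e (relaxed_projection D1 e x))"
    for x
  have "continuous_on (cball 0 r) T"
    unfolding T_def
    by (rule continuous_on_compose2[OF continuous_on_relaxed_projection[OF D3(1-3)]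
          continuous_on_compose2[OF continuous_on_relaxed_projection[OF D2(1-3)]
            continuous_on_relaxed_projection[OF D1(1-3)]]]) auto
  moreover have "T ` cball 0 r \<subseteq> cball 0 r"
    unfolding T_def using D1(2,3) D2(2,3) D3(2,3) sub e
    by (auto intro!: relaxed_projection_in_cball simp del: mem_cball_0)
  ultimately obtain x where "T x = x"
    using brouwer_ball[OF r(1)] by blast
  then have "eps_cycle D1 D2 D3 e
      (relaxed_projection D1 e x, relaxed_projection D2 e (relaxed_projection D1 e x), x)"
    by (simp add: eps_cycle_iff_relaxed_projection T_def)
  then show ?thesis by blast
qed

lemma relaxed_projection_translation:
  assumes "closest_point D x - closest_point D y = x - y"
  shows "relaxed_projection D e x - relaxed_projection D e y = x - y"
proof -
  have "relaxed_projection D e x - relaxed_projection D e y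
      = (x - y) + e *\<^sub>R ((closest_point D x - closest_point D y) - (x - y))"
    by (simp add: relaxed_projection_def algebra_simps)
  then show ?thesis
    using assms by simp
qed

text \<open>Firm nonexpansiveness around the cycle forces every projection step of two
  \<open>\<epsilon>\<close>-cycles to act as a translation by one and the same vector.\<close>

lemma eps_cycle_differences:
  fixes D1 D2 D3 :: "'a::euclidean_space set"
  assumes D1: "convex D1" "closed D1" "D1 \<noteq> {}"
    and D2: "convex D2" "closed D2" "D2 \<noteq> {}"
    and D3: "convex D3" "closed D3" "D3 \<noteq> {}"
    and e: "0 < e" "e < 1"
    and u: "eps_cycle D1 D2 D3 e (u1, u2, u3)"
    and v: "eps_cycle D1 D2 D3 e (v1, v2, v3)"
  shows "closest_point D1 u3 - closest_point D1 v3 = u3 - v3"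
    and "closest_point D2 u1 - closest_point D2 v1 = u1 - v1"
    and "closest_point D3 u2 - closest_point D3 v2 = u2 - v2"
    and "u1 - v1 = u3 - v3" and "u2 - v2 = u3 - v3"
proof -
  have u': "u1 = relaxed_projection D1 e u3" "u2 = relaxed_projection D2 e u1"
      "u3 = relaxed_projection D3 e u2"
    using u unfolding eps_cycle_iff_relaxed_projection by blast+
  have v': "v1 = relaxed_projection D1 e v3" "v2 = relaxed_projection D2 e v1"
      "v3 = relaxed_projection D3 e v2"
    using v unfolding eps_cycle_iff_relaxed_projection by blast+
  define c where "c = e * (1 - e)"
  have c: "c > 0" using e by (simp add: c_def)
  define gap where "gap D x y = (norm ((x - y) - (closest_point D x - closest_point D y)))\<^sup>2"
    for D :: "'a set" and x y :: 'a
  have step: "(norm (relaxed_projection D e x - relaxed_projection D e y))\<^sup>2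
      \<le> (norm (x - y))\<^sup>2 - c * gap D x y"
    if "convex D" "closed D" "D \<noteq> {}" for D :: "'a set" and x y
    using relaxed_projection_firmly_nonexpansive[OF that] e by (simp add: c_def gap_def)
  have "(norm (u1 - v1))\<^sup>2 \<le> (norm (u3 - v3))\<^sup>2 - c * gap D1 u3 v3"
    "(norm (u2 - v2))\<^sup>2 \<le> (norm (u1 - v1))\<^sup>2 - c * gap D2 u1 v1"
    "(norm (u3 - v3))\<^sup>2 \<le> (norm (u2 - v2))\<^sup>2 - c * gap D3 u2 v2"
    using step[OF D1, of u3 v3, folded u'(1) v'(1)] step[OF D2, of u1 v1, folded u'(2) v'(2)]
      step[OF D3, of u2 v2, folded u'(3) v'(3)] by simp_all
  moreover have "c * gap D1 u3 v3 \<ge> 0" "c * gap D2 u1 v1 \<ge> 0" "c * gap D3 u2 v2 \<ge> 0"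
    using c by (simp_all add: gap_def)
  ultimately have "c * gap D1 u3 v3 = 0" "c * gap D2 u1 v1 = 0" "c * gap D3 u2 v2 = 0"
    by linarith+
  then show d1: "closest_point D1 u3 - closest_point D1 v3 = u3 - v3"
    and d2: "closest_point D2 u1 - closest_point D2 v1 = u1 - v1"
    and "closest_point D3 u2 - closest_point D3 v2 = u2 - v2"
    using c by (simp_all add: gap_def)
  show "u1 - v1 = u3 - v3" and "u2 - v2 = u3 - v3"
    using relaxed_projection_translation[OF d1, of e] relaxed_projection_translation[OF d2, of e]
      u'(1,2) v'(1,2) by simp_all
qed

lemma closest_point_translation_orthogonal:
  fixes D :: "'a::euclidean_space set"
  assumes "convex D" "closed D" "D \<noteq> {}"
    and "closest_point D x - closest_point D y = x - y"
  shows "inner (x - closest_point D x) (x - y) = 0"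
proof -
  have "inner (x - closest_point D x) (closest_point D y - closest_point D x) \<le> 0"
    "inner (y - closest_point D y) (closest_point D x - closest_point D y) \<le> 0"
    using closest_point_dot[OF assms(1,2)] closest_point_in_set[OF assms(2,3)] by blast+
  moreover have "closest_point D y - closest_point D x = - (x - y)"
    "y - closest_point D y = x - closest_point D x"
    using assms(4) by (simp_all add: algebra_simps)
  ultimately have "inner (x - closest_point D x) (y - x) \<le> 0"
    "inner (x - closest_point D x) (x - y) \<le> 0"
    using assms(4) by simp_all
  then show ?thesis
    by (simp add: inner_diff_right)
qed

lemma eps_cycle_unique_singleton:
  fixes D2 D3 :: "'a::euclidean_space set"
  assumes "convex D2" "closed D2" "D2 \<noteq> {}"
    and "convex D3" "closed D3" "D3 \<noteq> {}"
    and "0 < e" "e < 1"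
    and "eps_cycle {a} D2 D3 e u" "eps_cycle {a} D2 D3 e v"
  shows "u = v"
proof -
  obtain u1 u2 u3 v1 v2 v3 where uv: "u = (u1, u2, u3)" "v = (v1, v2, v3)"
    by (metis prod_cases3)
  have "closest_point {a} x = a" for x
    using closest_point_in_set[of "{a}" x] by auto
  then have "u3 - v3 = 0"
    using eps_cycle_differences(1)[of "{a}" D2 D3 e u1 u2 u3 v1 v2 v3] assms uv by simp
  moreover have "u1 - v1 = u3 - v3" "u2 - v2 = u3 - v3"
    using eps_cycle_differences(4,5)[of "{a}" D2 D3 e u1 u2 u3 v1 v2 v3] assms uv by simp_all
  ultimately show ?thesis
    using uv by simp
qed

lemma ex1_eps_cycle_singleton:
  fixes D2 D3 :: "'a::euclidean_space set"
  assumes "convex D2" "closed D2" "D2 \<noteq> {}" "bounded D2"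
    and "convex D3" "closed D3" "D3 \<noteq> {}" "bounded D3"
    and "0 < e" "e < 1"
  shows "\<exists>!u. eps_cycle {a} D2 D3 e u"
proof (rule ex_ex1I)
  show "\<exists>u. eps_cycle {a} D2 D3 e u"
    using eps_cycle_exists[of "{a}" D2 D3 e] assms by simp
  show "u = v" if "eps_cycle {a} D2 D3 e u" "eps_cycle {a} D2 D3 e v" for u v
    using eps_cycle_unique_singleton[of D2 D3 e a u v] assms that by simp
qed

section \<open>Sinusoids along an increasing sequence of angles\<close>

lemma strict_mono_less_limit:
  fixes s :: "nat \<Rightarrow> 'a::linorder_topology"
  assumes "strict_mono s" "s \<longlonglongrightarrow> L"
  shows "s k < L"
proof -
  have "s (Suc k) \<le> L"
    using assms by (intro incseq_le) (auto intro: strict_mono_mono)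
  then show ?thesis
    using strict_monoD[OF assms(1), of k "Suc k"] by simp
qed

lemma sinusoid_Rolle:
  fixes n1 n2 :: real
  assumes "a < b" "n1 * cos a + n2 * sin a = n1 * cos b + n2 * sin b"
  obtains z where "a < z" "z < b" "n2 * cos z = n1 * sin z"
proof -
  define f where "f x = n1 * cos x + n2 * sin x" for x
  have f': "(f has_real_derivative (n2 * cos x - n1 * sin x)) (at x)" for x
    unfolding f_def by (auto intro!: derivative_eq_intros)
  have "\<exists>z. a < z \<and> z < b \<and> (f has_real_derivative 0) (at z)"
  proof (rule Rolle)
    show "continuous_on {a..b} f"
      unfolding f_def by (intro continuous_intros)
    show "f differentiable (at x)" for x
      using f' real_differentiable_def by blast
  qed (use assms in \<open>simp_all add: f_def\<close>)
  then obtain z where "a < z" "z < b" "(f has_real_derivative 0) (at z)"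
    by blast
  moreover from this(3) have "n2 * cos z - n1 * sin z = 0"
    using DERIV_unique[OF f'[of z]] by simp
  ultimately show ?thesis
    using that by simp
qed

text \<open>Zeros of the derivative \<open>n2 cos - n1 sin\<close> are \<open>pi\<close> apart, so by Rolle the
  sinusoid takes no value three times on \<open>[0, pi/2)\<close>.\<close>

lemma sinusoid_no_three_equal_values:
  fixes n1 n2 :: real
  assumes "0 \<le> a" "a < b" "b < c" "c < pi / 2" "n2 \<noteq> 0"
    and "n1 * cos a + n2 * sin a = n1 * cos b + n2 * sin b"
    and "n1 * cos b + n2 * sin b = n1 * cos c + n2 * sin c"
  shows False
proof -
  obtain z1 where z1: "a < z1" "z1 < b" "n2 * cos z1 = n1 * sin z1"
    by (rule sinusoid_Rolle[OF assms(2,6)])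
  obtain z2 where z2: "b < z2" "z2 < c" "n2 * cos z2 = n1 * sin z2"
    by (rule sinusoid_Rolle[OF assms(3,7)])
  have "n1 * (sin z2 * cos z1 - cos z2 * sin z1) = 0"
    using z1(3) z2(3) by algebra
  then have "n1 * sin (z2 - z1) = 0"
    by (simp add: sin_diff)
  moreover have "sin (z2 - z1) > 0"
    using z1 z2 assms(1,4) by (intro sin_gt_zero) auto
  ultimately have "n1 = 0" by simp
  moreover have "cos z1 > 0"
    using z1 assms(1-4) by (intro cos_gt_zero) auto
  ultimately show False
    using z1(3) assms(5) by simp
qed

lemma subset_pair_if_no_three:
  fixes K :: "nat set"
  assumes "\<And>a b c. a \<in> K \<Longrightarrow> b \<in> K \<Longrightarrow> c \<in> K \<Longrightarrow> a < b \<Longrightarrow> b < c \<Longrightarrow> False"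
  obtains i j where "i \<noteq> j" "K \<subseteq> {i, j}"
proof (cases "K = {}")
  case True
  then show ?thesis using that[of 0 1] by simp
next
  case False
  define i where "i = (LEAST k. k \<in> K)"
  have i: "i \<in> K" "\<And>k. k \<in> K \<Longrightarrow> i \<le> k"
    using False LeastI_ex[of "\<lambda>k. k \<in> K"] Least_le[of "\<lambda>k. k \<in> K"] by (auto simp: i_def)
  show ?thesis
  proof (cases "K - {i} = {}")
    case True
    then show ?thesis using that[of i "Suc i"] by auto
  next
    case False
    define j where "j = (LEAST k. k \<in> K - {i})"
    have j: "j \<in> K - {i}" "\<And>k. k \<in> K - {i} \<Longrightarrow> j \<le> k"
      using False LeastI_ex[of "\<lambda>k. k \<in> K - {i}"] Least_le[of "\<lambda>k. k \<in> K - {i}"]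
      by (auto simp: j_def)
    have "c \<in> {i, j}" if "c \<in> K" for c
    proof (rule ccontr)
      assume "c \<notin> {i, j}"
      then have "i < j" "j < c"
        using i j that by (metis Diff_iff insert_iff le_neq_implies_less)+
      then show False
        using assms i(1) j(1) that by blast
    qed
    then show ?thesis
      using that[of i j] j(1) by blast
  qed
qed

lemma sinusoid_level_set_at_most_two:
  fixes s :: "nat \<Rightarrow> real"
  assumes "strict_mono s" "\<And>k. 0 \<le> s k" "\<And>k. s k < pi / 2" "n2 \<noteq> 0"
  obtains i j :: nat where "i \<noteq> j" "{k. n1 * cos (s k) + n2 * sin (s k) = M} \<subseteq> {i, j}"
proof (rule subset_pair_if_no_three)
  fix a b c
  assume "a \<in> {k. n1 * cos (s k) + n2 * sin (s k) = M}" "b \<in> {k. n1 * cos (s k) + n2 * sin (s k) = M}"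
    "c \<in> {k. n1 * cos (s k) + n2 * sin (s k) = M}" "a < b" "b < c"
  then show False
    using sinusoid_no_three_equal_values[of "s a" "s b" "s c" n2 n1] assms strict_monoD[OF assms(1)]
    by auto
qed (use that in blast)

lemma affine_interpolation_two_points:
  fixes x1 y1 x2 y2 z1 z2 :: real
  assumes "(x1, y1) \<noteq> (x2, y2)"
  obtains a b1 b2 where "z1 = a + b1 * x1 + b2 * y1" "z2 = a + b1 * x2 + b2 * y2"
proof -
  define d1 d2 where "d1 = x2 - x1" and "d2 = y2 - y1"
  have N: "d1\<^sup>2 + d2\<^sup>2 \<noteq> 0"
    using assms by (auto simp: d1_def d2_def)
  define g where "g = (z2 - z1) / (d1\<^sup>2 + d2\<^sup>2)"
  show ?thesis
  proof (rule that[of "z1 - g * d1 * x1 - g * d2 * y1" "g * d1" "g * d2"])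
    show "z1 = z1 - g * d1 * x1 - g * d2 * y1 + g * d1 * x1 + g * d2 * y1"
      by simp
    have "z1 - g * d1 * x1 - g * d2 * y1 + g * d1 * x2 + g * d2 * y2 = z1 + g * (d1\<^sup>2 + d2\<^sup>2)"
      by (simp add: d1_def d2_def power2_eq_square algebra_simps)
    also have "\<dots> = z2"
      using N by (simp add: g_def)
    finally show "z2 = z1 - g * d1 * x1 - g * d2 * y1 + g * d1 * x2 + g * d2 * y2" ..
  qed
qed

lemma sinusoid_level_set_affine_interpolation:
  fixes s z :: "nat \<Rightarrow> real"
  assumes s: "strict_mono s" "\<And>k. 0 \<le> s k" "\<And>k. s k < pi / 2" and "n2 \<noteq> 0"
  obtains a b1 b2 where "\<And>k. n1 * cos (s k) + n2 * sin (s k) = M \<Longrightarrow>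
      z k = a + b1 * cos (s k) + b2 * sin (s k)"
proof -
  obtain i j where ij: "i \<noteq> j" "{k. n1 * cos (s k) + n2 * sin (s k) = M} \<subseteq> {i, j}"
    using sinusoid_level_set_at_most_two[OF assms] by blast
  have "cos (s i) \<noteq> cos (s j)"
  proof
    assume "cos (s i) = cos (s j)"
    moreover have "s i \<le> pi" "s j \<le> pi"
      using s(3)[of i] s(3)[of j] pi_gt_zero by linarith+
    ultimately have "s i = s j"
      using cos_inj_pi s(2) by blast
    then show False
      using ij(1) strict_mono_eq[OF s(1)] by simp
  qed
  then have "(cos (s i), sin (s i)) \<noteq> (cos (s j), sin (s j))"
    by simp
  then obtain a b1 b2 where "z i = a + b1 * cos (s i) + b2 * sin (s i)"
      "z j = a + b1 * cos (s j) + b2 * sin (s j)"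
    by (rule affine_interpolation_two_points)
  with ij(2) show ?thesis
    using that[of a b1 b2] by blast
qed

lemma convergent_uniform_gap_below:
  fixes f :: "nat \<Rightarrow> real"
  assumes "f \<longlonglongrightarrow> L" "L < M"
  obtains \<eta> where "\<eta> > 0" "\<And>k. f k < M \<Longrightarrow> \<eta> \<le> M - f k"
proof -
  obtain N where N: "\<And>k. k \<ge> N \<Longrightarrow> f k < (L + M) / 2"
    using order_tendstoD(2)[OF assms(1), of "(L + M) / 2"] assms(2)
    by (auto simp: eventually_sequentially)
  define A where "A = insert ((M - L) / 2) ((\<lambda>k. M - f k) ` {k. k < N \<and> f k < M})"
  have A: "finite A" "A \<noteq> {}" "\<forall>a\<in>A. 0 < a"
    using assms(2) by (auto simp: A_def)
  show ?thesis
  proof (rule that[of "Min A"])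
    show "Min A > 0"
      using A by simp
    fix k assume "f k < M"
    show "Min A \<le> M - f k"
    proof (cases "k < N")
      case True
      then show ?thesis
        using A(1) \<open>f k < M\<close> by (intro Min_le_iff[THEN iffD2]) (auto simp: A_def)
    next
      case False
      have "Min A \<le> (M - L) / 2"
        using A(1) by (rule Min_le) (simp add: A_def)
      moreover have "f k < (L + M) / 2"
        using N False by simp
      ultimately show ?thesis by simp
    qed
  qed
qed

text \<open>Away from its at most two contact points the sinusoid stays uniformly below \<open>M\<close>,
  because it tends to \<open>n2 < M\<close>; this margin absorbs the bounded error of the interpolant.\<close>

lemma sinusoid_support_sandwich:
  fixes s z :: "nat \<Rightarrow> real"
  assumes s: "strict_mono s" "\<And>k. 0 \<le> s k" "s \<longlonglongrightarrow> pi / 2"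
    and z: "bounded (range z)"
    and n: "n2 \<noteq> 0" "n2 < M" "\<And>k. n1 * cos (s k) + n2 * sin (s k) \<le> M"
  obtains a b1 b2 C where "\<And>k. \<bar>z k - (a + b1 * cos (s k) + b2 * sin (s k))\<bar>
      \<le> C * (M - (n1 * cos (s k) + n2 * sin (s k)))"
proof -
  obtain B where B: "\<And>k. \<bar>z k\<bar> \<le> B"
    using z by (auto simp: bounded_iff)
  define f where "f k = n1 * cos (s k) + n2 * sin (s k)" for k
  obtain a b1 b2 where ab: "\<And>k. f k = M \<Longrightarrow> z k = a + b1 * cos (s k) + b2 * sin (s k)"
    using sinusoid_level_set_affine_interpolation[OF s(1,2) strict_mono_less_limit[OF s(1,3)] n(1)]
    unfolding f_def by blast
  have "f \<longlonglongrightarrow> n1 * cos (pi / 2) + n2 * sin (pi / 2)"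
    unfolding f_def by (intro tendsto_intros s(3))
  then have "f \<longlonglongrightarrow> n2"
    by simp
  then obtain \<eta> where \<eta>: "\<eta> > 0" "\<And>k. f k < M \<Longrightarrow> \<eta> \<le> M - f k"
    using convergent_uniform_gap_below[OF _ n(2)] by blast
  define R where "R = B + \<bar>a\<bar> + \<bar>b1\<bar> + \<bar>b2\<bar>"
  have bound: "\<bar>z k - (a + b1 * cos (s k) + b2 * sin (s k))\<bar> \<le> R / \<eta> * (M - f k)" for k
  proof (cases "f k = M")
    case True
    then show ?thesis
      using ab by simp
  next
    case False
    then have "f k < M"
      using n(3)[of k] by (simp add: f_def)
    have "\<bar>b1 * cos (s k)\<bar> \<le> \<bar>b1\<bar>" "\<bar>b2 * sin (s k)\<bar> \<le> \<bar>b2\<bar>"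
      by (simp_all add: abs_mult mult_left_le)
    then have "\<bar>z k - (a + b1 * cos (s k) + b2 * sin (s k))\<bar> \<le> R"
      using B[of k] unfolding R_def by linarith
    also have "R = R / \<eta> * \<eta>"
      using \<eta>(1) by simp
    also have "\<dots> \<le> R / \<eta> * (M - f k)"
    proof (rule mult_left_mono)
      show "\<eta> \<le> M - f k"
        using \<eta>(2) \<open>f k < M\<close> .
      show "0 \<le> R / \<eta>"
        using \<eta>(1) B[of k] unfolding R_def by simp
    qed
    finally show ?thesis .
  qed
  show ?thesis
    using bound unfolding f_def by (rule that)
qed

lemma sinusoid_below_amplitude_at_pole:
  fixes s :: "nat \<Rightarrow> real"
  assumes s: "strict_mono s" "\<And>k. 0 \<le> s k" "s \<longlonglongrightarrow> pi / 2"
    and "0 \<le> n2" "\<And>k. n1 * cos (s k) + n2 * sin (s k) \<le> n2"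
  shows "n1 \<le> 0"
proof -
  have "n1 \<le> n2 * cos (s k)" for k
  proof -
    have "s k < pi / 2"
      using strict_mono_less_limit[OF s(1,3)] .
    then have cos: "cos (s k) > 0" and sin: "0 \<le> sin (s k)"
      using s(2)[of k] pi_gt_zero by (auto intro!: cos_gt_zero_pi sin_ge_zero)
    have "sin (s k) * sin (s k) \<le> sin (s k)"
      using sin by (simp add: mult_left_le)
    then have "1 - sin (s k) \<le> (cos (s k))\<^sup>2"
      using sin_cos_squared_add[of "s k"] by (simp add: power2_eq_square)
    have "n1 * cos (s k) \<le> n2 * (1 - sin (s k))"
      using assms(5)[of k] by (simp add: algebra_simps)
    also have "\<dots> \<le> n2 * (cos (s k))\<^sup>2"
      using \<open>1 - sin (s k) \<le> (cos (s k))\<^sup>2\<close> assms(4) by (rule mult_left_mono)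
    finally have "n1 * cos (s k) \<le> (n2 * cos (s k)) * cos (s k)"
      by (simp add: power2_eq_square mult.assoc)
    then show ?thesis
      using cos by simp
  qed
  moreover have "(\<lambda>k. n2 * cos (s k)) \<longlonglongrightarrow> n2 * cos (pi / 2)"
    by (intro tendsto_intros s(3))
  ultimately have "n1 \<le> n2 * cos (pi / 2)"
    using LIMSEQ_le_const by blast
  then show ?thesis by simp
qed

text \<open>The line \<open>n1 x + n2 y = n1 q1 + n2 q2\<close> through a point \<open>q\<close> of the unit disc
  supports the generators; the sign conditions keep it away from their limit point \<open>(0, 1)\<close>.\<close>

lemma support_line_misses_pole:
  fixes s :: "nat \<Rightarrow> real"
  assumes s: "strict_mono s" "\<And>k. 0 \<le> s k" "s \<longlonglongrightarrow> pi / 2"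
    and n: "0 < n2" "n1 \<le> 0 \<Longrightarrow> 0 < q1"
    and q: "q1\<^sup>2 + q2\<^sup>2 \<le> 1"
    and support: "\<And>k. n1 * cos (s k) + n2 * sin (s k) \<le> n1 * q1 + n2 * q2"
  shows "n2 < n1 * q1 + n2 * q2"
proof -
  have "(\<lambda>k. n1 * cos (s k) + n2 * sin (s k)) \<longlonglongrightarrow> n1 * cos (pi / 2) + n2 * sin (pi / 2)"
    by (intro tendsto_intros s(3))
  then have "(\<lambda>k. n1 * cos (s k) + n2 * sin (s k)) \<longlonglongrightarrow> n2"
    by simp
  then have "n2 \<le> n1 * q1 + n2 * q2"
    by (rule LIMSEQ_le_const2) (use support in auto)
  moreover have "n1 * q1 + n2 * q2 \<noteq> n2"
  proof
    assume M: "n1 * q1 + n2 * q2 = n2"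
    then have "n1 \<le> 0"
      using sinusoid_below_amplitude_at_pole[OF s less_imp_le[OF n(1)]] support by simp
    then have "0 < q1" "n1 * q1 \<le> 0"
      using n(2) by (auto simp: mult_nonpos_nonneg)
    then have "n2 * 1 \<le> n2 * q2"
      using M by simp
    then have "1 \<le> q2\<^sup>2"
      using n(1) by simp
    moreover have "0 < q1\<^sup>2"
      using \<open>0 < q1\<close> by simp
    ultimately show False
      using q by linarith
  qed
  ultimately show ?thesis by simp
qed

section \<open>The convex hull of points on the unit cylinder\<close>

text \<open>The hypothesis puts \<open>G\<close> into two closed half-spaces; on the plane
  \<open>n1 x + n2 y = M\<close> they pinch the height to the affine function.\<close>

lemma closure_convex_hull_height_on_support:
  fixes G :: "(real^3) set"
  assumes G: "\<And>g. g \<in> G \<Longrightarrow>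
      \<bar>g$3 - (a + b1 * g$1 + b2 * g$2)\<bar> \<le> C * (M - (n1 * g$1 + n2 * g$2))"
    and p: "p \<in> closure (convex hull G)" "n1 * p$1 + n2 * p$2 = M"
  shows "p$3 = a + b1 * p$1 + b2 * p$2"
proof -
  define H where "H \<sigma> = {w :: real^3. inner (vector [C * n1 - \<sigma> * b1, C * n2 - \<sigma> * b2, \<sigma>]) w
      \<le> C * M + \<sigma> * a}" for \<sigma> :: real
  have H_iff: "w \<in> H \<sigma> \<longleftrightarrow> \<sigma> * (w$3 - (a + b1 * w$1 + b2 * w$2)) \<le> C * (M - (n1 * w$1 + n2 * w$2))"
    for \<sigma> w
    by (simp add: H_def inner_vec_def sum_3 algebra_simps)
  have "G \<subseteq> H 1 \<inter> H (-1)"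
    using G by (auto simp: H_iff abs_le_iff)
  moreover have "convex (H 1 \<inter> H (-1))" "closed (H 1 \<inter> H (-1))"
    unfolding H_def by (intro convex_Int convex_halfspace_le closed_Int closed_halfspace_le)+
  ultimately have "closure (convex hull G) \<subseteq> H 1 \<inter> H (-1)"
    by (meson closure_minimal hull_minimal)
  then have "p \<in> H 1" "p \<in> H (-1)"
    using p(1) by auto
  then show ?thesis
    using p(2) by (simp add: H_iff)
qed

lemma closure_convex_hull_range_properties:
  fixes f :: "nat \<Rightarrow> 'a::euclidean_space"
  assumes "\<And>k. norm (f k) \<le> R"
  shows "convex (closure (convex hull range f))" "closed (closure (convex hull range f))"
    "closure (convex hull range f) \<noteq> {}" "bounded (closure (convex hull range f))"
proof -
  have "bounded (range f)"
    using assms by (auto simp: bounded_iff)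
  then show "convex (closure (convex hull range f))" "closed (closure (convex hull range f))"
    "closure (convex hull range f) \<noteq> {}" "bounded (closure (convex hull range f))"
    by (simp_all add: bounded_convex_hull bounded_closure)
qed

lemma norm_vector_cos_sin_le:
  shows "norm (vector [cos x, sin x, c] :: real^3) \<le> 2 + \<bar>c\<bar>"
    and "norm (vector [cos x, sin x] :: real^2) \<le> 2"
proof -
  have "norm (vector [cos x, sin x, c] :: real^3) \<le> \<bar>cos x\<bar> + \<bar>sin x\<bar> + \<bar>c\<bar>"
    "norm (vector [cos x, sin x] :: real^2) \<le> \<bar>cos x\<bar> + \<bar>sin x\<bar>"
    using norm_le_l1_cart[of "vector [cos x, sin x, c] :: real^3"]
      norm_le_l1_cart[of "vector [cos x, sin x] :: real^2"] by (simp_all add: sum_3 sum_2)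
  then show "norm (vector [cos x, sin x, c] :: real^3) \<le> 2 + \<bar>c\<bar>"
    "norm (vector [cos x, sin x] :: real^2) \<le> 2"
    using abs_cos_le_one[of x] abs_sin_le_one[of x] by linarith+
qed

lemma convex_closed_unit_cylinder:
  shows "convex {w :: real^3. (w$1)\<^sup>2 + (w$2)\<^sup>2 \<le> 1}"
    and "closed {w :: real^3. (w$1)\<^sup>2 + (w$2)\<^sup>2 \<le> 1}"
proof -
  have "{w :: real^3. (w$1)\<^sup>2 + (w$2)\<^sup>2 \<le> 1} = (\<lambda>w. (w$1, w$2)) -` cball 0 1"
    by (auto simp: norm_Pair)
  moreover have "linear (\<lambda>w :: real^3. (w$1, w$2))"
    by (intro linearI) auto
  ultimately show "convex {w :: real^3. (w$1)\<^sup>2 + (w$2)\<^sup>2 \<le> 1}"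
    by (metis convex_cball convex_linear_vimage)
  show "closed {w :: real^3. (w$1)\<^sup>2 + (w$2)\<^sup>2 \<le> 1}"
    by (intro closed_Collect_le continuous_intros)
qed

lemma vertical_segment_properties:
  fixes a b c c' :: real
  shows "convex (convex hull {vector [a, b, c], vector [a, b, c']} :: (real^3) set)"
    and "closed (convex hull {vector [a, b, c], vector [a, b, c']} :: (real^3) set)"
    and "convex hull {vector [a, b, c], vector [a, b, c']} \<noteq> ({} :: (real^3) set)"
    and "bounded (convex hull {vector [a, b, c], vector [a, b, c']} :: (real^3) set)"
    and "convex hull {vector [a, b, c], vector [a, b, c']} \<subseteq> {w :: real^3. w$1 = a \<and> w$2 = b}"
proof -
  have "compact (convex hull {vector [a, b, c], vector [a, b, c']} :: (real^3) set)"
    by (intro compact_convex_hull finite_imp_compact) simp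
  then show "closed (convex hull {vector [a, b, c], vector [a, b, c']} :: (real^3) set)"
    "bounded (convex hull {vector [a, b, c], vector [a, b, c']} :: (real^3) set)"
    by (rule compact_imp_closed, rule compact_imp_bounded)
  show "convex (convex hull {vector [a, b, c], vector [a, b, c']} :: (real^3) set)"
    "convex hull {vector [a, b, c], vector [a, b, c']} \<noteq> ({} :: (real^3) set)"
    by simp_all
  have "convex {w :: real^3. w$1 = a \<and> w$2 = b}"
    unfolding convex_def by (auto simp flip: distrib_right)
  then show "convex hull {vector [a, b, c], vector [a, b, c']} \<subseteq> {w :: real^3. w$1 = a \<and> w$2 = b}"
    by (intro hull_minimal) auto
qed

text \<open>The set \<open>C3\<close> of the statement is \<open>cylinder_hull (\<lambda>k. t (Suc k)) (\<lambda>k. (-1) ^ Suc k)\<close>.\<close>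

definition cylinder_hull :: "(nat \<Rightarrow> real) \<Rightarrow> (nat \<Rightarrow> real) \<Rightarrow> (real^3) set" where
  "cylinder_hull s z = closure (convex hull range (\<lambda>k. vector [cos (s k), sin (s k), z k]))"

lemma cylinder_hull_properties:
  assumes "bounded (range z)"
  shows "convex (cylinder_hull s z)" "closed (cylinder_hull s z)"
    "cylinder_hull s z \<noteq> {}" "bounded (cylinder_hull s z)"
proof -
  obtain B where B: "\<And>k. \<bar>z k\<bar> \<le> B"
    using assms by (auto simp: bounded_iff)
  have "norm (vector [cos (s k), sin (s k), z k] :: real^3) \<le> 2 + B" for k
    using norm_vector_cos_sin_le(1)[of "s k" "z k"] B[of k] by linarith
  then show "convex (cylinder_hull s z)" "closed (cylinder_hull s z)"
    "cylinder_hull s z \<noteq> {}" "bounded (cylinder_hull s z)"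
    unfolding cylinder_hull_def by (rule closure_convex_hull_range_properties)+
qed

lemma vector_in_cylinder_hull: "vector [cos (s k), sin (s k), z k] \<in> cylinder_hull s z"
  unfolding cylinder_hull_def by (meson closure_subset hull_inc rangeI subsetD)

lemma cylinder_hull_subset_unit_cylinder:
  "cylinder_hull s z \<subseteq> {w. (w$1)\<^sup>2 + (w$2)\<^sup>2 \<le> 1}"
  unfolding cylinder_hull_def using convex_closed_unit_cylinder
  by (intro closure_minimal hull_minimal) auto

lemma cylinder_hull_height_on_support:
  fixes s z :: "nat \<Rightarrow> real"
  assumes s: "strict_mono s" "\<And>k. 0 \<le> s k" "s \<longlonglongrightarrow> pi / 2"
    and z: "bounded (range z)"
    and n: "n2 \<noteq> 0" "n2 < M" "\<And>k. n1 * cos (s k) + n2 * sin (s k) \<le> M"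
    and p: "p \<in> cylinder_hull s z" "p' \<in> cylinder_hull s z"
      "n1 * p$1 + n2 * p$2 = M" "p'$1 = p$1" "p'$2 = p$2"
  shows "p'$3 = p$3"
proof -
  obtain a b1 b2 C where sandwich: "\<And>k. \<bar>z k - (a + b1 * cos (s k) + b2 * sin (s k))\<bar>
      \<le> C * (M - (n1 * cos (s k) + n2 * sin (s k)))"
    using sinusoid_support_sandwich[OF s z n] by blast
  have G: "\<And>g :: real^3. g \<in> range (\<lambda>k. vector [cos (s k), sin (s k), z k]) \<Longrightarrow>
      \<bar>g$3 - (a + b1 * g$1 + b2 * g$2)\<bar> \<le> C * (M - (n1 * g$1 + n2 * g$2))"
    using sandwich by fastforce
  show ?thesis
    using closure_convex_hull_height_on_support[OF G] p unfolding cylinder_hull_def by simp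
qed

section \<open>Uniqueness of \<open>\<epsilon>\<close>-cycles in space\<close>

text \<open>The planar parts of \<open>u1, u2, u3\<close> form the \<open>\<epsilon>\<close>-cycle for the points \<open>(-2, 2)\<close>,
  \<open>(2, 2)\<close> and the planar part \<open>q\<close> of the projection onto \<open>C3\<close>; solving this linear
  cycle gives the planar part of the normal \<open>u2 - q\<close> in closed form.\<close>

lemma eps_cycle_planar_normal_signs:
  fixes C1 C2 C3 :: "(real^3) set"
  assumes C1: "closed C1" "C1 \<noteq> {}" "C1 \<subseteq> {w. w$1 = -2 \<and> w$2 = 2}"
    and C2: "closed C2" "C2 \<noteq> {}" "C2 \<subseteq> {w. w$1 = 2 \<and> w$2 = 2}"
    and e: "0 < e" "e < 1"
    and u: "eps_cycle C1 C2 C3 e (u1, u2, u3)"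
    and q: "q = closest_point C3 u2" "q$2 \<le> 1"
  shows "0 < u2$2 - q$2" and "u2$1 - q$1 \<le> 0 \<Longrightarrow> 0 < q$1"
proof -
  have P: "closest_point C1 u3 $ 1 = -2" "closest_point C1 u3 $ 2 = 2"
    "closest_point C2 u1 $ 1 = 2" "closest_point C2 u1 $ 2 = 2"
    using closest_point_in_set[OF C1(1,2), of u3] closest_point_in_set[OF C2(1,2), of u1] C1(3) C2(3)
    by auto
  have "u1 = u3 + e *\<^sub>R (closest_point C1 u3 - u3)" "u2 = u1 + e *\<^sub>R (closest_point C2 u1 - u1)"
    "u3 = u2 + e *\<^sub>R (q - u2)"
    using u q(1) unfolding eps_cycle_def prod.case by blast+
  from this[THEN arg_cong, of "\<lambda>w. w$1"] this[THEN arg_cong, of "\<lambda>w. w$2"]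
  have "u1$1 = u3$1 + e * (-2 - u3$1)" "u2$1 = u1$1 + e * (2 - u1$1)" "u3$1 = u2$1 + e * (q$1 - u2$1)"
    "u1$2 = u3$2 + e * (2 - u3$2)" "u2$2 = u1$2 + e * (2 - u1$2)" "u3$2 = u2$2 + e * (q$2 - u2$2)"
    by (simp_all add: P)
  then have n1: "(1 - (1 - e)^3) * (u2$1 - q$1) = 2 * e\<^sup>2 - e * (2 - e) * q$1"
    and n2: "(1 - (1 - e)^3) * (u2$2 - q$2) = e * (2 - e) * (2 - q$2)"
    unfolding power2_eq_square power3_eq_cube by algebra+
  have c: "0 < 1 - (1 - e)^3"
    using e by (simp add: power_less_one_iff)
  have e2: "0 < e * (2 - e)"
    using e by simp
  have "0 < (1 - (1 - e)^3) * (u2$2 - q$2)"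
    unfolding n2 using e2 q(2) by simp
  then show "0 < u2$2 - q$2"
    using c by (simp add: zero_less_mult_iff)
  assume "u2$1 - q$1 \<le> 0"
  then have "(1 - (1 - e)^3) * (u2$1 - q$1) \<le> 0"
    using c by (simp add: mult_nonneg_nonpos)
  moreover have "0 < 2 * e\<^sup>2"
    using e by simp
  ultimately have "0 < e * (2 - e) * q$1"
    using n1 by linarith
  then show "0 < q$1"
    using e2 by (simp add: zero_less_mult_iff)
qed

text \<open>If the normal \<open>u2 - p\<close> is horizontal, the supporting plane at \<open>p\<close> is vertical and
  meets the hull in a face on which the height is a function of the planar position.\<close>

lemma eps_cycle_horizontal_normal_height:
  fixes C1 C2 :: "(real^3) set"
  assumes C1: "closed C1" "C1 \<noteq> {}" "C1 \<subseteq> {w. w$1 = -2 \<and> w$2 = 2}"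
    and C2: "closed C2" "C2 \<noteq> {}" "C2 \<subseteq> {w. w$1 = 2 \<and> w$2 = 2}"
    and s: "strict_mono s" "\<And>k. 0 \<le> s k" "s \<longlonglongrightarrow> pi / 2"
    and z: "bounded (range z)"
    and e: "0 < e" "e < 1"
    and u: "eps_cycle C1 C2 (cylinder_hull s z) e (u1, u2, u3)"
    and p: "p = closest_point (cylinder_hull s z) u2" "(u2 - p)$3 = 0"
    and p': "p' \<in> cylinder_hull s z" "p'$1 = p$1" "p'$2 = p$2"
  shows "p'$3 = p$3"
proof -
  define n where "n = u2 - p"
  note C3 = cylinder_hull_properties[OF z]
  have "p \<in> cylinder_hull s z"
    using closest_point_in_set[OF C3(2,3)] p(1) by simp
  have support: "n$1 * cos (s k) + n$2 * sin (s k) \<le> n$1 * p$1 + n$2 * p$2" for k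
  proof -
    have "inner n (vector [cos (s k), sin (s k), z k] - p) \<le> 0"
      using closest_point_dot[OF C3(1,2) vector_in_cylinder_hull] p(1) by (simp add: n_def)
    then show ?thesis
      using p(2) by (simp add: n_def inner_vec_def sum_3 algebra_simps)
  qed
  have disk: "(p$1)\<^sup>2 + (p$2)\<^sup>2 \<le> 1"
    using cylinder_hull_subset_unit_cylinder \<open>p \<in> cylinder_hull s z\<close> by blast
  then have "(p$2)\<^sup>2 \<le> 1"
    using zero_le_power2[of "p$1"] by linarith
  then have "p$2 \<le> 1"
    by (simp add: abs_square_le_1 abs_le_iff)
  then have n2: "0 < n$2" and n1: "n$1 \<le> 0 \<Longrightarrow> 0 < p$1"
    using eps_cycle_planar_normal_signs[OF C1 C2 e u p(1)] by (simp_all add: n_def)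
  show ?thesis
  proof (rule cylinder_hull_height_on_support[where M = "n$1 * p$1 + n$2 * p$2", OF s z])
    show "n$2 < n$1 * p$1 + n$2 * p$2"
      by (rule support_line_misses_pole[OF s n2 n1 disk support])
  qed (use n2 support \<open>p \<in> cylinder_hull s z\<close> p' in auto)
qed

lemma eps_cycle_unique_cylinder_hull:
  fixes C1 C2 :: "(real^3) set"
  assumes C1: "convex C1" "closed C1" "C1 \<noteq> {}" "C1 \<subseteq> {w. w$1 = -2 \<and> w$2 = 2}"
    and C2: "convex C2" "closed C2" "C2 \<noteq> {}" "C2 \<subseteq> {w. w$1 = 2 \<and> w$2 = 2}"
    and s: "strict_mono s" "\<And>k. 0 \<le> s k" "s \<longlonglongrightarrow> pi / 2"
    and z: "bounded (range z)"
    and e: "0 < e" "e < 1"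
    and u: "eps_cycle C1 C2 (cylinder_hull s z) e u"
    and v: "eps_cycle C1 C2 (cylinder_hull s z) e v"
  shows "u = v"
proof -
  note C3 = cylinder_hull_properties[OF z]
  obtain u1 u2 u3 v1 v2 v3 where uv: "u = (u1, u2, u3)" "v = (v1, v2, v3)"
    by (metis prod_cases3)
  note diff = eps_cycle_differences[OF C1(1-3) C2(1-3) C3(1-3) e u[unfolded uv] v[unfolded uv]]
  define d where "d = u3 - v3"
  have "closest_point C1 u3 \<in> {w. w$1 = -2 \<and> w$2 = 2}"
    "closest_point C1 v3 \<in> {w. w$1 = -2 \<and> w$2 = 2}"
    using closest_point_in_set[OF C1(2,3)] C1(4) by blast+
  then have d12: "d$1 = 0" "d$2 = 0"
    unfolding d_def diff(1)[symmetric] by simp_all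
  define p p' where "p = closest_point (cylinder_hull s z) u2"
    and "p' = closest_point (cylinder_hull s z) v2"
  have p': "p' = p - d"
    using diff(3,5) by (simp add: p_def p'_def d_def algebra_simps)
  have "inner (u2 - p) d = 0"
    using closest_point_translation_orthogonal[OF C3(1-3) diff(3)] diff(5) by (simp add: p_def d_def)
  then have "(u2 - p)$3 * d$3 = 0"
    using d12 by (simp add: inner_vec_def sum_3)
  moreover have "p'$3 = p$3" if "(u2 - p)$3 = 0"
  proof (rule eps_cycle_horizontal_normal_height[OF C1(2-4) C2(2-4) s z e u[unfolded uv] p_def that])
    show "p' \<in> cylinder_hull s z"
      using closest_point_in_set[OF C3(2,3)] by (simp add: p'_def)
    show "p'$1 = p$1" "p'$2 = p$2"
      using p' d12 by simp_all
  qed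
  ultimately have "d = 0"
    using d12 p' by (auto simp: vec_eq_iff forall_3)
  then show "u = v"
    using diff(4,5) uv by (simp add: d_def)
qed

lemma ex1_eps_cycle_cylinder_hull:
  fixes C1 C2 :: "(real^3) set"
  assumes C1: "convex C1" "closed C1" "C1 \<noteq> {}" "bounded C1" "C1 \<subseteq> {w. w$1 = -2 \<and> w$2 = 2}"
    and C2: "convex C2" "closed C2" "C2 \<noteq> {}" "bounded C2" "C2 \<subseteq> {w. w$1 = 2 \<and> w$2 = 2}"
    and s: "strict_mono s" "\<And>k. 0 \<le> s k" "s \<longlonglongrightarrow> pi / 2"
    and z: "bounded (range z)"
    and e: "0 < e" "e < 1"
  shows "\<exists>!u. eps_cycle C1 C2 (cylinder_hull s z) e u"
proof (rule ex_ex1I)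
  show "\<exists>u. eps_cycle C1 C2 (cylinder_hull s z) e u"
    using eps_cycle_exists[OF C1(1-4) C2(1-4) cylinder_hull_properties[OF z]] e by simp
  show "u = v" if "eps_cycle C1 C2 (cylinder_hull s z) e u" "eps_cycle C1 C2 (cylinder_hull s z) e v"
    for u v
    using eps_cycle_unique_cylinder_hull[OF C1(1-3,5) C2(1-3,5) s z e that] .
qed

lemma shifted_angle_sequence:
  fixes t :: "nat \<Rightarrow> real"
  assumes "\<forall>k\<ge>1. t k < t (Suc k)" "t 1 = pi / 4" "t \<longlonglongrightarrow> pi / 2"
  shows "strict_mono (\<lambda>k. t (Suc k))" "\<And>k. 0 \<le> t (Suc k)" "(\<lambda>k. t (Suc k)) \<longlonglongrightarrow> pi / 2"
proof -
  show mono: "strict_mono (\<lambda>k. t (Suc k))"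
    unfolding strict_mono_Suc_iff using assms(1) by simp
  have "0 < t 1"
    using assms(2) pi_gt_zero by linarith
  then show "0 \<le> t (Suc k)" for k
    using strict_mono_leD[OF mono le0, of k] by simp
  show "(\<lambda>k. t (Suc k)) \<longlonglongrightarrow> pi / 2"
    by (rule LIMSEQ_Suc[OF assms(3)])
qed

lemma Setcompr_ge_one_eq_range_Suc: "{f k | k. k \<ge> (1::nat)} = range (\<lambda>k. f (Suc k))"
proof (intro equalityI subsetI)
  fix x assume "x \<in> {f k | k. k \<ge> 1}"
  then obtain k where "x = f k" "1 \<le> k"
    by blast
  then have "x = f (Suc (k - 1))"
    by simp
  then show "x \<in> range (\<lambda>k. f (Suc k))"
    by blast
qed auto

theorem proposition2:
  fixes t :: "nat \<Rightarrow> real"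
  assumes "\<forall>k\<ge>1. t k < t (Suc k)"
    and "t 1 = pi / 4"
    and "t \<longlonglongrightarrow> pi / 2"
  shows "\<forall>\<epsilon>::real. 0 < \<epsilon> \<and> \<epsilon> < 1 \<longrightarrow>
    (\<exists>!u. eps_cycle
       (convex hull {vector [-2, 2, 1], vector [-2, 2, -1]} :: (real^3) set)
       (convex hull {vector [2, 2, 1], vector [2, 2, -1]})
       (closure (convex hull {vector [cos (t k), sin (t k), (-1) ^ k] | k. k \<ge> 1}))
       \<epsilon> u) \<and>
    (\<exists>!u. eps_cycle
       ({vector [-2, 2]} :: (real^2) set)
       {vector [2, 2]}
       (closure (convex hull {vector [cos (t k), sin (t k)] | k. k \<ge> 1}))
       \<epsilon> u)"
proof -
  define s where "s k = t (Suc k)" for k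
  note s = shifted_angle_sequence[OF assms, folded s_def]
  have G3: "{vector [cos (t k), sin (t k), (-1) ^ k] | k. k \<ge> 1} =
      range (\<lambda>k. vector [cos (s k), sin (s k), (-1) ^ Suc k] :: real^3)"
    and G2: "{vector [cos (t k), sin (t k)] | k. k \<ge> 1} =
      range (\<lambda>k. vector [cos (s k), sin (s k)] :: real^2)"
    unfolding s_def by (rule Setcompr_ge_one_eq_range_Suc)+
  have "\<exists>!u. eps_cycle (convex hull {vector [-2, 2, 1], vector [-2, 2, -1]})
      (convex hull {vector [2, 2, 1], vector [2, 2, -1]}) (cylinder_hull s (\<lambda>k. (-1) ^ Suc k)) \<epsilon> u"
    if "0 < \<epsilon>" "\<epsilon> < 1" for \<epsilon>
    by (rule ex1_eps_cycle_cylinder_hull[OF vertical_segment_properties vertical_segment_properties s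
          _ that]) (auto intro: boundedI[of _ 1])
  moreover have "\<exists>!u. eps_cycle {vector [-2, 2]} {vector [2, 2] :: real^2}
      (closure (convex hull range (\<lambda>k. vector [cos (s k), sin (s k)]))) \<epsilon> u"
    if "0 < \<epsilon>" "\<epsilon> < 1" for \<epsilon>
    by (rule ex1_eps_cycle_singleton[OF _ _ _ _
          closure_convex_hull_range_properties[OF norm_vector_cos_sin_le(2)] that]) auto
  ultimately show ?thesis
    unfolding G3 G2 cylinder_hull_def by blast
qed

end
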